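(* For every density matrix $\sigma''$ on $\mathcal{H}$ with largest eigenvalue $\alpha$, $$d(\sigma'')\ge \alpha^{-1}\big(1+R_g(\sigma'')\big).$$
   Context: $\mathcal{H}=\mathcal{H}_1\otimes\cdots\otimes\mathcal{H}_m$ is finite-dimensional. A positive semidefinite operator is separable if it is a nonnegative combination of tensor products of positive semidefinite operators on the $\mathcal{H}_k$; $\mathfrak{S}$ is the set of separable density matrices. For a density matrix $\sigma$, $d(\sigma):=\min \mathrm{Tr}(\Pi)/\mathrm{Tr}(\sigma\Pi)$ over separable positive semidefinite operators $\Pi$ with $\mathrm{Tr}(\sigma\Pi)>0$ and $0\le \Pi/\mathrm{Tr}(\sigma\Pi)\le I$. Global robustness: $R_g(\sigma)=\min\{t\ge0:\exists$ a density matrix $\varrho$ with $(\sigma+t\varrho)/(1+t)\in\mathfrak{S}\}$. *)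

theory Defs
  imports "Jordan_Normal_Form.Matrix" "Jordan_Normal_Form.Char_Poly"
begin

text \<open>Operators on the composite space H = H_1 (x) ... (x) H_m are represented as complex
  square matrices.  The local dimensions are given by the list ds (length m), and
  the composite dimension is prod_list ds.  The ordering on complex numbers is the
  one of HOL-Library Complex_Order (z \<ge> 0 iff z is real and nonnegative).\<close>

definition mtrace :: "complex mat \<Rightarrow> complex" where
  "mtrace A = (\<Sum>i<dim_row A. A $$ (i, i))"

definition kron :: "complex mat \<Rightarrow> complex mat \<Rightarrow> complex mat" where
  "kron A B = mat (dim_row A * dim_row B) (dim_col A * dim_col B)
     (\<lambda>(i, j). A $$ (i div dim_row B, j div dim_col B) * B $$ (i mod dim_row B, j mod dim_col B))"

fun tensor_list :: "complex mat list \<Rightarrow> complex mat" where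
  "tensor_list [] = 1\<^sub>m 1"
| "tensor_list (P # Ps) = kron P (tensor_list Ps)"

definition psd :: "nat \<Rightarrow> complex mat \<Rightarrow> bool" where
  "psd n A \<longleftrightarrow> A \<in> carrier_mat n n \<and> (\<forall>v \<in> carrier_vec n. (A *\<^sub>v v) \<bullet>c v \<ge> 0)"

definition total_dim :: "nat list \<Rightarrow> nat" where
  "total_dim ds = prod_list ds"

definition density :: "nat list \<Rightarrow> complex mat \<Rightarrow> bool" where
  "density ds A \<longleftrightarrow> psd (total_dim ds) A \<and> mtrace A = 1"

fun mat_sum :: "nat \<Rightarrow> nat \<Rightarrow> (nat \<Rightarrow> complex mat) \<Rightarrow> complex mat" where
  "mat_sum n 0 f = 0\<^sub>m n n"
| "mat_sum n (Suc N) f = mat_sum n N f + f N"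

definition separable :: "nat list \<Rightarrow> complex mat \<Rightarrow> bool" where
  "separable ds A \<longleftrightarrow>
     (\<exists>(N::nat) (c :: nat \<Rightarrow> real) (P :: nat \<Rightarrow> nat \<Rightarrow> complex mat).
        (\<forall>j<N. c j \<ge> 0 \<and> (\<forall>k<length ds. psd (ds ! k) (P j k))) \<and>
        A = mat_sum (total_dim ds) N
              (\<lambda>j. complex_of_real (c j) \<cdot>\<^sub>m tensor_list (map (P j) [0..<length ds])))"

definition sep_density :: "nat list \<Rightarrow> complex mat \<Rightarrow> bool" where
  "sep_density ds A \<longleftrightarrow> density ds A \<and> separable ds A"

definition d_val :: "nat list \<Rightarrow> complex mat \<Rightarrow> real" where
  "d_val ds \<sigma> = Inf {Re (mtrace Pm) / Re (mtrace (\<sigma> * Pm)) | Pm.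
      psd (total_dim ds) Pm \<and> separable ds Pm \<and> Re (mtrace (\<sigma> * Pm)) > 0 \<and>
      psd (total_dim ds) ((1 / mtrace (\<sigma> * Pm)) \<cdot>\<^sub>m Pm) \<and>
      psd (total_dim ds) (1\<^sub>m (total_dim ds) - (1 / mtrace (\<sigma> * Pm)) \<cdot>\<^sub>m Pm)}"

definition global_robustness :: "nat list \<Rightarrow> complex mat \<Rightarrow> real" where
  "global_robustness ds \<sigma> = Inf {t. t \<ge> 0 \<and> (\<exists>\<rho>. density ds \<rho> \<and>
      sep_density ds ((1 / complex_of_real (1 + t)) \<cdot>\<^sub>m (\<sigma> + complex_of_real t \<cdot>\<^sub>m \<rho>)))}"

end

theory Submission
  imports Defs "Jordan_Normal_Form.Spectral_Radius"
begin

text \<open>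
  Let \<Pi> be an admissible test operator in the definition of d(\<sigma>) and normalise it
  to P = \<Pi> / Tr(\<sigma>\<Pi>), so that 0 \<le> P \<le> I and Tr(\<sigma>P) = 1 = Tr \<sigma>.  The heart of the argument is
  the operator inequality \<sigma> \<le> \<alpha>P: since Tr(\<sigma>(I - P)) = 0 with both factors positive
  semidefinite, I - P annihilates every eigenvector of \<sigma> with positive eigenvalue, so P acts as
  the identity on the support of \<sigma>, where \<sigma> is bounded by its largest eigenvalue \<alpha>.  Hence the
  separable operator Q = \<alpha>P dominates \<sigma>, and any separable Q \<ge> \<sigma> yields the robustness
  witness \<rho> = (Q - \<sigma>)/t with t = Tr Q - 1, because (\<sigma> + t\<rho>)/(1 + t) = Q / Tr Q is a separable
  state.  Thus R_g(\<sigma>) \<le> \<alpha> Tr P - 1, i.e. Tr \<Pi> / Tr(\<sigma>\<Pi>) \<ge> (1 + R_g(\<sigma>))/\<alpha>, and taking the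
  infimum over \<Pi> gives the theorem.
\<close>

section \<open>Adjoints and unitary matrices\<close>

definition adj :: "complex mat \<Rightarrow> complex mat" where
  "adj A = mat (dim_col A) (dim_row A) (\<lambda>(i, j). cnj (A $$ (j, i)))"

lemma adj_dims [simp]: "dim_row (adj A) = dim_col A" "dim_col (adj A) = dim_row A"
  by (auto simp: adj_def)

lemma adj_index [simp]: "i < dim_col A \<Longrightarrow> j < dim_row A \<Longrightarrow> adj A $$ (i, j) = cnj (A $$ (j, i))"
  by (auto simp: adj_def)

lemma adj_carrier [simp]: "A \<in> carrier_mat n m \<Longrightarrow> adj A \<in> carrier_mat m n"
  unfolding carrier_mat_def by simp

lemma adj_adj [simp]: "adj (adj A) = A"
  by (rule eq_matI) auto

text \<open>Closure of square matrices under multiplication, in a form usable as a conditional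
  simplification rule (the dimension occurs in the conclusion).\<close>
lemma square_mult_carrier:
  "A \<in> carrier_mat n n \<Longrightarrow> B \<in> carrier_mat n n \<Longrightarrow> A * B \<in> carrier_mat n n"
  by simp

lemma square_mult_vec_carrier:
  "A \<in> carrier_mat n n \<Longrightarrow> v \<in> carrier_vec n \<Longrightarrow> A *\<^sub>v v \<in> carrier_vec n"
  by simp

lemma adj_mult:
  assumes "A \<in> carrier_mat n m" "B \<in> carrier_mat m k"
  shows "adj (A * B) = adj B * adj A"
  using assms by (intro eq_matI) (auto simp: scalar_prod_def mult.commute)

lemma adj_congruence:
  assumes "A \<in> carrier_mat n n" "W \<in> carrier_mat n n"
  shows "adj (adj W * A * W) = adj W * adj A * W"
  using assms by (simp add: adj_mult[of _ n n _ n] assoc_mult_mat[of _ n n _ n _ n])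

lemma adj_mult_index:
  assumes "X \<in> carrier_mat nr nc" "Y \<in> carrier_mat nr nc'" "i < nc" "j < nc'"
  shows "(adj X * Y) $$ (i, j) = col Y j \<bullet>c col X i"
  using assms by (auto simp: scalar_prod_def mult.commute)

lemma adj_cscalar:
  assumes A: "A \<in> carrier_mat nr nc" and x: "x \<in> carrier_vec nc" and y: "y \<in> carrier_vec nr"
  shows "(A *\<^sub>v x) \<bullet>c y = x \<bullet>c (adj A *\<^sub>v y)"
proof -
  have "(A *\<^sub>v x) \<bullet>c y = (\<Sum>p<nr. \<Sum>k<nc. A $$ (p, k) * x $ k * cnj (y $ p))"
    using A x y by (auto simp: scalar_prod_def atLeast0LessThan sum_distrib_right intro!: sum.cong)
  also have "\<dots> = (\<Sum>k<nc. \<Sum>p<nr. A $$ (p, k) * x $ k * cnj (y $ p))"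
    by (rule sum.swap)
  also have "\<dots> = x \<bullet>c (adj A *\<^sub>v y)"
    using A x y by (auto simp: scalar_prod_def atLeast0LessThan sum_distrib_left mult_ac
        intro!: sum.cong)
  finally show ?thesis .
qed

definition unitary :: "nat \<Rightarrow> complex mat \<Rightarrow> bool" where
  "unitary n U \<longleftrightarrow> U \<in> carrier_mat n n \<and> adj U * U = 1\<^sub>m n"

lemma unitaryD:
  assumes "unitary n U"
  shows "U \<in> carrier_mat n n" "adj U * U = 1\<^sub>m n" "U * adj U = 1\<^sub>m n"
  using assms mat_mult_left_right_inverse[of "adj U" n U] by (auto simp: unitary_def)

lemma unitary_mult:
  assumes U: "unitary n U" and V: "unitary n V"
  shows "unitary n (U * V)"
proof -
  note UD = unitaryD[OF U] and VD = unitaryD[OF V]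
  have "adj (U * V) * (U * V) = adj V * (adj U * (U * V))"
    using UD VD by (simp add: adj_mult[of _ n n _ n] assoc_mult_mat[of _ n n _ n _ n])
  also have "adj U * (U * V) = (adj U * U) * V"
    by (rule assoc_mult_mat[symmetric]) (use UD VD in auto)
  also have "adj V * ((adj U * U) * V) = 1\<^sub>m n"
    using UD VD by simp
  finally show ?thesis using UD VD by (simp add: unitary_def)
qed

lemma unitary_col:
  assumes U: "unitary n U" and k: "k < n"
  shows "adj U *\<^sub>v col U k = unit_vec n k" "col U k \<bullet>c col U k = 1"
proof -
  note UD = unitaryD[OF U]
  show "adj U *\<^sub>v col U k = unit_vec n k"
    using col_mult2[OF adj_carrier[OF UD(1)] UD(1) k] UD(2) k by simp
  show "col U k \<bullet>c col U k = 1"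
    using adj_mult_index[OF UD(1) UD(1) k k] UD(2) k by simp
qed

lemma cscalar_self_real: "v \<bullet>c v = complex_of_real (Re (v \<bullet>c v))" "Re (v \<bullet>c v) \<ge> 0"
proof -
  have "v \<bullet>c v \<ge> 0" by auto
  then show "v \<bullet>c v = complex_of_real (Re (v \<bullet>c v))" "Re (v \<bullet>c v) \<ge> 0"
    by (auto simp: less_eq_complex_def complex_eq_iff)
qed

lemma unitary_conj_cancel:
  assumes W: "unitary n W" and A: "A \<in> carrier_mat n n"
  shows "W * (adj W * A * W) * adj W = A"
proof -
  note WD = unitaryD[OF W]
  have aW: "adj W \<in> carrier_mat n n" using WD by simp
  have "W * (adj W * A * W) * adj W = W * (adj W * A * (W * adj W))"
    using WD(1) aW A by (simp add: assoc_mult_mat[of _ n n _ n _ n] square_mult_carrier)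
  also have "adj W * A * (W * adj W) = adj W * A" using WD A by simp
  also have "W * (adj W * A) = (W * adj W) * A"
    by (rule assoc_mult_mat[symmetric]) (use WD aW A in auto)
  finally show ?thesis using WD A by simp
qed

definition normalize_vec :: "complex vec \<Rightarrow> complex vec" where
  "normalize_vec w = (1 / complex_of_real (sqrt (Re (w \<bullet>c w)))) \<cdot>\<^sub>v w"

lemma normalize_vec_cscalar:
  assumes "w \<in> carrier_vec n" "u \<in> carrier_vec n"
  shows "normalize_vec w \<bullet>c normalize_vec u
       = 1 / complex_of_real (sqrt (Re (w \<bullet>c w))) * (1 / complex_of_real (sqrt (Re (u \<bullet>c u))))
         * (w \<bullet>c u)"
  using assms by (simp add: normalize_vec_def conjugate_smult_vec)

lemma normalize_vec_unit:
  assumes w: "w \<in> carrier_vec n" and nz: "w \<bullet>c w \<noteq> 0"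
  shows "normalize_vec w \<bullet>c normalize_vec w = 1"
proof -
  define s where "s = Re (w \<bullet>c w)"
  have eq: "w \<bullet>c w = complex_of_real s" unfolding s_def by (rule cscalar_self_real)
  have "s \<noteq> 0" using eq nz by auto
  moreover have "s \<ge> 0" unfolding s_def by (rule cscalar_self_real(2))
  ultimately have "s > 0" by simp
  have nf: "1 / complex_of_real (sqrt (Re (w \<bullet>c w))) = complex_of_real (1 / sqrt s)"
    unfolding s_def by simp
  have "normalize_vec w \<bullet>c normalize_vec w
      = complex_of_real (1 / sqrt s) * complex_of_real (1 / sqrt s) * complex_of_real s"
    unfolding normalize_vec_cscalar[OF w w] nf unfolding eq ..
  also have "\<dots> = complex_of_real (1 / sqrt s * (1 / sqrt s) * s)" by (simp only: of_real_mult)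
  also have "1 / sqrt s * (1 / sqrt s) * s = 1" using \<open>s > 0\<close> by (simp add: field_simps)
  finally show ?thesis by simp
qed

lemma unitary_of_corthogonal:
  assumes ws: "set ws \<subseteq> carrier_vec n" "corthogonal ws" "length ws = n"
  shows "unitary n (mat_of_cols n (map normalize_vec ws))"
    and "\<And>j. j < n \<Longrightarrow> col (mat_of_cols n (map normalize_vec ws)) j = normalize_vec (ws ! j)"
proof -
  define W where "W = mat_of_cols n (map normalize_vec ws)"
  have wsc: "ws ! j \<in> carrier_vec n" if "j < n" for j using ws that by auto
  have W: "W \<in> carrier_mat n n" unfolding W_def using ws by auto
  show colW: "col W j = normalize_vec (ws ! j)" if "j < n" for j
    unfolding W_def using that ws wsc[OF that]
    by (subst col_mat_of_cols) (auto simp: normalize_vec_def)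
  have "adj W * W = 1\<^sub>m n"
  proof (rule eq_matI)
    fix i j assume "i < dim_row (1\<^sub>m n)" and "j < dim_col (1\<^sub>m n)"
    then have i: "i < n" and j: "j < n" by auto
    have "(adj W * W) $$ (i, j) = normalize_vec (ws ! j) \<bullet>c normalize_vec (ws ! i)"
      unfolding adj_mult_index[OF W W i j] colW[OF i] colW[OF j] ..
    also have "\<dots> = 1\<^sub>m n $$ (i, j)"
      using corthogonalD[OF ws(2), of j i] i j ws(3) normalize_vec_unit[OF wsc[OF i]]
        normalize_vec_cscalar[OF wsc[OF j] wsc[OF i]]
      by (cases "i = j") auto
    finally show "(adj W * W) $$ (i, j) = 1\<^sub>m n $$ (i, j)" .
  qed (use W in auto)
  then show "unitary n W" using W unfolding unitary_def by blast
qed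

lemma unitary_with_first_col:
  assumes v: "v \<in> carrier_vec n" and v0: "v \<noteq> 0\<^sub>v n"
  shows "\<exists>W c. unitary n W \<and> col W 0 = c \<cdot>\<^sub>v v"
proof -
  interpret cof_vec_space n "TYPE(complex)" .
  define b where "b = basis_completion v"
  from basis_completion[OF v v0, folded b_def]
  have dist_b: "distinct b" and indep: "\<not> lin_dep (set b)" and b: "set b \<subseteq> carrier_vec n"
    and hdb: "hd b = v" and len_b: "length b = n" by auto
  have n: "n > 0" using v0 v by (cases n, auto)
  from hdb len_b n obtain vs where bv: "b = v # vs" by (cases b, auto)
  define ws where "ws = gram_schmidt n b"
  from gram_schmidt_result[OF b dist_b indep ws_def]
  have ws: "set ws \<subseteq> carrier_vec n" "corthogonal ws" "length ws = n" by (auto simp: len_b)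
  have "hd ws = v" unfolding ws_def bv using v by simp
  then have "ws ! 0 = v" using hd_conv_nth[of ws] ws(3) n by fastforce
  then have "col (mat_of_cols n (map normalize_vec ws)) 0
      = (1 / complex_of_real (sqrt (Re (v \<bullet>c v)))) \<cdot>\<^sub>v v"
    unfolding unitary_of_corthogonal(2)[OF ws n] normalize_vec_def by simp
  then show ?thesis using unitary_of_corthogonal(1)[OF ws] by blast
qed

section \<open>The spectral theorem for Hermitian matrices\<close>

definition corner_ext :: "complex \<Rightarrow> complex mat \<Rightarrow> complex mat" where
  "corner_ext a X = mat (Suc (dim_row X)) (Suc (dim_col X)) (\<lambda>(i, j).
     if i = 0 \<and> j = 0 then a else if i = 0 \<or> j = 0 then 0 else X $$ (i - 1, j - 1))"

lemma corner_ext_dims [simp]: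
  "dim_row (corner_ext a X) = Suc (dim_row X)" "dim_col (corner_ext a X) = Suc (dim_col X)"
  by (simp_all add: corner_ext_def)

lemma corner_ext_carrier [simp]:
  "X \<in> carrier_mat m m \<Longrightarrow> corner_ext a X \<in> carrier_mat (Suc m) (Suc m)"
  by (simp add: corner_ext_def)

lemma corner_ext_mult:
  assumes X: "X \<in> carrier_mat m m" and Y: "Y \<in> carrier_mat m m"
  shows "corner_ext a X * corner_ext b Y = corner_ext (a * b) (X * Y)"
proof (rule eq_matI)
  fix i j assume "i < dim_row (corner_ext (a * b) (X * Y))" "j < dim_col (corner_ext (a * b) (X * Y))"
  then have i: "i < Suc m" and j: "j < Suc m" using X Y by (auto simp: corner_ext_def)
  have "(corner_ext a X * corner_ext b Y) $$ (i, j)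
      = (\<Sum>k<Suc m. corner_ext a X $$ (i, k) * corner_ext b Y $$ (k, j))"
    using X Y i j by (auto simp: scalar_prod_def atLeast0LessThan intro!: sum.cong)
  also have "\<dots> = corner_ext a X $$ (i, 0) * corner_ext b Y $$ (0, j)
      + (\<Sum>k<m. corner_ext a X $$ (i, Suc k) * corner_ext b Y $$ (Suc k, j))"
    by (subst sum.lessThan_Suc_shift) simp
  also have "\<dots> = corner_ext (a * b) (X * Y) $$ (i, j)"
    using X Y i j
    by (cases i; cases j) (auto simp: corner_ext_def scalar_prod_def atLeast0LessThan intro!: sum.cong)
  finally show "(corner_ext a X * corner_ext b Y) $$ (i, j) = corner_ext (a * b) (X * Y) $$ (i, j)" .
qed (use X Y in \<open>auto simp: corner_ext_def\<close>)

lemma corner_ext_adj: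
  "X \<in> carrier_mat m m \<Longrightarrow> adj (corner_ext a X) = corner_ext (cnj a) (adj X)"
  by (rule eq_matI) (auto simp: corner_ext_def)

lemma corner_ext_one: "corner_ext 1 (1\<^sub>m m) = 1\<^sub>m (Suc m)"
  by (rule eq_matI) (auto simp: corner_ext_def)

lemma corner_ext_diag: "mat_diag (Suc m) d = corner_ext (d 0) (mat_diag m (\<lambda>k. d (Suc k)))"
  by (rule eq_matI) (auto simp: corner_ext_def mat_diag_def)

lemma corner_ext_unitary:
  assumes "unitary m U"
  shows "unitary (Suc m) (corner_ext 1 U)"
proof -
  have U: "U \<in> carrier_mat m m" "adj U * U = 1\<^sub>m m" using assms by (auto simp: unitary_def)
  have "adj (corner_ext 1 U) * corner_ext 1 U = corner_ext 1 (adj U * U)"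
    using U by (simp add: corner_ext_adj corner_ext_mult[of _ m])
  then show ?thesis using U by (simp add: unitary_def corner_ext_one)
qed

lemma hermitian_first_col_block:
  assumes B: "B \<in> carrier_mat (Suc m) (Suc m)" and hB: "adj B = B"
    and col0: "col B 0 = lam \<cdot>\<^sub>v unit_vec (Suc m) 0"
  shows "\<exists>B3. B3 \<in> carrier_mat m m \<and> adj B3 = B3 \<and> B = corner_ext lam B3"
proof -
  have Bh: "B $$ (i, j) = cnj (B $$ (j, i))" if "i < Suc m" "j < Suc m" for i j
  proof -
    have "B $$ (i, j) = adj B $$ (i, j)" by (simp only: hB)
    then show ?thesis using that B by simp
  qed
  have B0: "B $$ (i, 0) = (if i = 0 then lam else 0)" if "i < Suc m" for i
    using arg_cong[OF col0, of "\<lambda>w. w $ i"] that B by (auto simp: unit_vec_def)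
  define B3 where "B3 = mat m m (\<lambda>(i, j). B $$ (Suc i, Suc j))"
  have B3: "B3 \<in> carrier_mat m m" unfolding B3_def by auto
  have "adj B3 = B3"
  proof (rule eq_matI)
    fix i j assume "i < dim_row B3" "j < dim_col B3"
    then have "i < m" "j < m" using B3 by auto
    then show "adj B3 $$ (i, j) = B3 $$ (i, j)"
      using Bh[of "Suc j" "Suc i"] by (simp add: B3_def)
  qed (use B3 in auto)
  moreover have "B = corner_ext lam B3"
  proof (rule eq_matI)
    fix i j assume "i < dim_row (corner_ext lam B3)" "j < dim_col (corner_ext lam B3)"
    then have i: "i < Suc m" and j: "j < Suc m" using B3 by auto
    consider "j = 0" | "i = 0" "j \<noteq> 0" | i' j' where "i = Suc i'" "j = Suc j'"
      by (meson not0_implies_Suc)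
    then show "B $$ (i, j) = corner_ext lam B3 $$ (i, j)"
    proof cases
      case 1
      then show ?thesis using B0[OF i] i B3 by (simp add: corner_ext_def)
    next
      case 2
      then show ?thesis using B0[OF j] Bh[OF i j] j B3 by (simp add: corner_ext_def)
    next
      case 3
      then show ?thesis using i j B3 by (simp add: corner_ext_def B3_def)
    qed
  qed (use B B3 in auto)
  ultimately show ?thesis using B3 by blast
qed

text \<open>Deflation step: conjugating a Hermitian matrix by a unitary whose first column is an
  eigenvector splits off the eigenvalue and leaves a Hermitian block of size one less.\<close>
lemma hermitian_deflation:
  assumes A: "A \<in> carrier_mat (Suc m) (Suc m)" and hA: "adj A = A"
  shows "\<exists>W lam A3. unitary (Suc m) W \<and> A3 \<in> carrier_mat m m \<and> adj A3 = A3 \<and>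
           adj W * A * W = corner_ext lam A3"
proof -
  define n where "n = Suc m"
  have A: "A \<in> carrier_mat n n" and n0: "0 < n" using A by (auto simp: n_def)
  obtain lam where "eigenvalue A lam"
    using spectrum_non_empty[OF A n0] unfolding spectrum_def by auto
  then obtain v where v: "v \<in> carrier_vec n" "v \<noteq> 0\<^sub>v n" "A *\<^sub>v v = lam \<cdot>\<^sub>v v"
    unfolding eigenvalue_def eigenvector_def using A by auto
  obtain W c where W: "unitary n W" and Wc: "col W 0 = c \<cdot>\<^sub>v v"
    using unitary_with_first_col[OF v(1,2)] by blast
  note WD = unitaryD[OF W]
  have aW: "adj W \<in> carrier_mat n n" using WD by simp
  have "col (adj W * A * W) 0 = (adj W * A) *\<^sub>v col W 0" using WD A n0 by auto
  also have "\<dots> = adj W *\<^sub>v (A *\<^sub>v col W 0)"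
    by (rule assoc_mult_mat_vec[of _ n n _ n]) (use WD A aW in auto)
  also have "\<dots> = lam \<cdot>\<^sub>v (adj W *\<^sub>v col W 0)"
    unfolding Wc using A v aW by (simp add: mult_mat_vec smult_smult_assoc mult.commute)
  also have "adj W *\<^sub>v col W 0 = unit_vec n 0" by (rule unitary_col(1)[OF W n0])
  finally have "col (adj W * A * W) 0 = lam \<cdot>\<^sub>v unit_vec n 0" .
  moreover have "adj (adj W * A * W) = adj W * A * W"
    using adj_congruence[OF A WD(1)] hA by simp
  moreover have "adj W * A * W \<in> carrier_mat n n" using WD A by auto
  ultimately show ?thesis using hermitian_first_col_block[of "adj W * A * W" m lam] W
    unfolding n_def by blast
qed

theorem hermitian_spectral:
  assumes "A \<in> carrier_mat n n" and "adj A = A"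
  shows "\<exists>U d. unitary n U \<and> A = U * mat_diag n d * adj U"
  using assms
proof (induction n arbitrary: A)
  case 0
  then show ?case
    by (intro exI[of _ "1\<^sub>m 0"]) (auto simp: unitary_def intro!: eq_matI)
next
  case (Suc m A)
  obtain W lam A3 where W: "unitary (Suc m) W" and A3: "A3 \<in> carrier_mat m m" "adj A3 = A3"
    and split: "adj W * A * W = corner_ext lam A3"
    using hermitian_deflation[OF Suc.prems] by blast
  obtain U3 d3 where U3: "unitary m U3" and A3d: "A3 = U3 * mat_diag m d3 * adj U3"
    using Suc.IH[OF A3] by blast
  note WD = unitaryD[OF W] and U3D = unitaryD[OF U3]
  define V where "V = corner_ext 1 U3"
  define d where "d = case_nat lam d3"
  have V: "unitary (Suc m) V" unfolding V_def by (rule corner_ext_unitary[OF U3])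
  have D3: "mat_diag m d3 \<in> carrier_mat m m" by simp
  have "V * mat_diag (Suc m) d * adj V
      = corner_ext 1 U3 * corner_ext lam (mat_diag m d3) * corner_ext 1 (adj U3)"
    unfolding V_def corner_ext_diag[of m d] corner_ext_adj[OF U3D(1)] by (simp add: d_def)
  also have "\<dots> = corner_ext lam A3"
    unfolding A3d corner_ext_mult[OF U3D(1) D3]
    using corner_ext_mult[OF mult_carrier_mat[OF U3D(1) D3] adj_carrier[OF U3D(1)]] by simp
  finally have VD: "V * mat_diag (Suc m) d * adj V = corner_ext lam A3" .
  have "A = W * (adj W * A * W) * adj W"
    by (rule unitary_conj_cancel[OF W Suc.prems(1), symmetric])
  also have "\<dots> = (W * V) * mat_diag (Suc m) d * adj (W * V)"
    unfolding split VD[symmetric] using WD(1) unitaryD(1)[OF V]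
    by (simp add: adj_mult[of _ "Suc m" "Suc m" _ "Suc m"] square_mult_carrier
        assoc_mult_mat[of _ "Suc m" "Suc m" _ "Suc m" _ "Suc m"])
  finally show ?case using unitary_mult[OF W V] by blast
qed

section \<open>Quadratic forms and positive semidefinite matrices\<close>

definition qf :: "complex mat \<Rightarrow> complex vec \<Rightarrow> complex" where
  "qf A v = (A *\<^sub>v v) \<bullet>c v"

lemma psd_carrier: "psd n A \<Longrightarrow> A \<in> carrier_mat n n"
  by (simp add: psd_def)

lemma psd_qf:
  assumes "psd n A" "v \<in> carrier_vec n"
  shows "qf A v = complex_of_real (Re (qf A v))" "Re (qf A v) \<ge> 0"
  using assms unfolding psd_def qf_def by (auto simp: less_eq_complex_def complex_eq_iff)

lemma psdI:
  assumes "A \<in> carrier_mat n n"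
    and "\<And>v. v \<in> carrier_vec n \<Longrightarrow> Im (qf A v) = 0 \<and> Re (qf A v) \<ge> 0"
  shows "psd n A"
  using assms unfolding psd_def qf_def by (auto simp: less_eq_complex_def)

lemma psd_one: "psd n (1\<^sub>m n)"
  unfolding psd_def by auto

lemma mult_unit_vec:
  assumes "(M :: complex mat) \<in> carrier_mat nr n" "k < n"
  shows "M *\<^sub>v unit_vec n k = col M k"
  using assms by (intro eq_vecI) (auto simp: scalar_prod_def unit_vec_def
      if_distrib[of "\<lambda>x. _ * x"] sum.delta cong: if_cong)

lemma qf_sum:
  assumes "A \<in> carrier_mat n n" "v \<in> carrier_vec n"
  shows "qf A v = (\<Sum>l<n. (\<Sum>i<n. A $$ (l, i) * v $ i) * cnj (v $ l))"
  using assms by (auto simp: qf_def scalar_prod_def atLeast0LessThan intro!: sum.cong)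

lemma qf_minus:
  assumes "A \<in> carrier_mat n n" "B \<in> carrier_mat n n" "v \<in> carrier_vec n"
  shows "qf (A - B) v = qf A v - qf B v"
  unfolding qf_def using assms
  by (simp add: minus_mult_distrib_mat_vec minus_scalar_prod_distrib[of _ n])

lemma smult_mat_vec:
  assumes "(A :: complex mat) \<in> carrier_mat nr nc" "v \<in> carrier_vec nc"
  shows "(a \<cdot>\<^sub>m A) *\<^sub>v v = a \<cdot>\<^sub>v (A *\<^sub>v v)"
  using assms by (intro eq_vecI) (auto simp: scalar_prod_def sum_distrib_left mult_ac)

lemma qf_smult:
  assumes "A \<in> carrier_mat n n" "v \<in> carrier_vec n"
  shows "qf (a \<cdot>\<^sub>m A) v = a * qf A v"
  unfolding qf_def using assms by (simp add: smult_mat_vec)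

lemma qf_one: "v \<in> carrier_vec n \<Longrightarrow> qf (1\<^sub>m n) v = v \<bullet>c v"
  unfolding qf_def by simp

lemma qf_unit_vec:
  assumes A: "A \<in> carrier_mat n n" and i: "i < n"
  shows "qf A (unit_vec n i) = A $$ (i, i)"
proof -
  have "qf A (unit_vec n i) = (\<Sum>k<n. col A i $ k * (if k = i then 1 else 0))"
    unfolding qf_def mult_unit_vec[OF A i]
    using A i by (auto simp: scalar_prod_def atLeast0LessThan unit_vec_def intro!: sum.cong)
  also have "\<dots> = A $$ (i, i)"
    using A i by (simp add: if_distrib[of "\<lambda>x. _ * x"] sum.delta' cong: if_cong)
  finally show ?thesis .
qed

lemma qf_two:
  assumes A: "A \<in> carrier_mat n n" and ij: "i < n" "j < n" "i \<noteq> j"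
  shows "qf A (vec n (\<lambda>t. (if t = i then 1 else 0) + (if t = j then c else 0))) =
     A $$ (i, i) + c * A $$ (i, j) + cnj c * (A $$ (j, i) + c * A $$ (j, j))"
proof -
  let ?e = "\<lambda>t. (if t = i then 1 else 0) + (if t = j then c else 0)"
  have row: "(\<Sum>k<n. A $$ (l, k) * ?e k) = A $$ (l, i) + c * A $$ (l, j)" for l
  proof -
    have "(\<Sum>k<n. A $$ (l, k) * ?e k)
        = (\<Sum>k<n. (if k = i then A $$ (l, k) else 0) + (if k = j then c * A $$ (l, k) else 0))"
      by (rule sum.cong) (use ij in \<open>auto simp: mult.commute\<close>)
    then show ?thesis using ij by (simp add: sum.distrib)
  qed
  have "qf A (vec n ?e) = (\<Sum>l<n. (A $$ (l, i) + c * A $$ (l, j)) * cnj (?e l))"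
    unfolding qf_sum[OF A vec_carrier] by (simp add: row)
  also have "\<dots> = (\<Sum>l<n. (if l = i then A $$ (l, i) + c * A $$ (l, j) else 0)
      + (if l = j then cnj c * (A $$ (l, i) + c * A $$ (l, j)) else 0))"
    by (rule sum.cong) (use ij in \<open>auto simp: mult.commute\<close>)
  finally show ?thesis using ij by (simp add: sum.distrib)
qed

text \<open>A positive semidefinite matrix is Hermitian (polarisation with e_i + e_j and
  e_i + i e_j).\<close>
lemma psd_hermitian:
  assumes P: "psd n A"
  shows "adj A = A"
proof -
  have A: "A \<in> carrier_mat n n" using psd_carrier[OF P] .
  have real: "Im (qf A v) = 0" if "v \<in> carrier_vec n" for v
    using psd_qf(1)[OF P that] by (metis Im_complex_of_real)
  have d: "Im (A $$ (i, i)) = 0" if "i < n" for i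
    using real[of "unit_vec n i"] qf_unit_vec[OF A that] by simp
  have h: "A $$ (j, i) = cnj (A $$ (i, j))" if ij: "i < n" "j < n" for i j
  proof (cases "i = j")
    case True
    then show ?thesis using d[OF ij(1)] by (simp add: complex_eq_iff)
  next
    case False
    have "Im (A $$ (i, j)) + Im (A $$ (j, i)) = 0"
      using real[of "vec n (\<lambda>t. (if t = i then 1 else 0) + (if t = j then 1 else 0))"]
      unfolding qf_two[OF A ij False] using d[OF ij(1)] d[OF ij(2)] by simp
    moreover have "Re (A $$ (i, j)) - Re (A $$ (j, i)) = 0"
      using real[of "vec n (\<lambda>t. (if t = i then 1 else 0) + (if t = j then \<i> else 0))"]
      unfolding qf_two[OF A ij False] using d[OF ij(1)] d[OF ij(2)] by simp
    ultimately show ?thesis by (simp add: complex_eq_iff)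
  qed
  show ?thesis
  proof (rule eq_matI)
    fix i j assume "i < dim_row A" "j < dim_col A"
    then have i: "i < n" and j: "j < n" using A by auto
    show "adj A $$ (i, j) = A $$ (i, j)" using h[OF j i] A i j by simp
  qed (use A in auto)
qed

lemma mat_diag_mult_vec:
  "y \<in> carrier_vec n \<Longrightarrow> mat_diag n d *\<^sub>v y = vec n (\<lambda>k. d k * y $ k)"
  by (intro eq_vecI) (auto simp: mat_diag_def scalar_prod_def
      if_distrib[of "\<lambda>x. x * _"] sum.delta cong: if_cong)

lemma qf_diag_conj:
  assumes U: "U \<in> carrier_mat n n" and v: "v \<in> carrier_vec n"
  shows "qf (U * mat_diag n d * adj U) v
       = (\<Sum>k<n. d k * ((adj U *\<^sub>v v) $ k * cnj ((adj U *\<^sub>v v) $ k)))"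
proof -
  define y where "y = adj U *\<^sub>v v"
  have y: "y \<in> carrier_vec n" unfolding y_def using adj_carrier[OF U] v by simp
  have Dy: "mat_diag n d *\<^sub>v y \<in> carrier_vec n" by (rule mult_mat_vec_carrier[OF mat_diag_dim y])
  have "(U * mat_diag n d * adj U) *\<^sub>v v = U *\<^sub>v (mat_diag n d *\<^sub>v y)"
    unfolding y_def using U v
    by (simp add: assoc_mult_mat_vec[of _ n n _ n] square_mult_carrier square_mult_vec_carrier)
  then have "qf (U * mat_diag n d * adj U) v = (mat_diag n d *\<^sub>v y) \<bullet>c y"
    unfolding qf_def using adj_cscalar[OF U Dy v] unfolding y_def by simp
  also have "\<dots> = (\<Sum>k<n. d k * (y $ k * cnj (y $ k)))"
    unfolding mat_diag_mult_vec[OF y] using y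
    by (auto simp: scalar_prod_def atLeast0LessThan mult_ac intro!: sum.cong)
  finally show ?thesis unfolding y_def .
qed

lemma qf_diag_conj_real:
  assumes "U \<in> carrier_mat n n" and "v \<in> carrier_vec n"
  shows "qf (U * mat_diag n (\<lambda>k. complex_of_real (r k)) * adj U) v
       = complex_of_real (\<Sum>k<n. r k * (cmod ((adj U *\<^sub>v v) $ k))\<^sup>2)"
  unfolding qf_diag_conj[OF assms] of_real_sum of_real_mult complex_norm_square ..

lemma psd_diagonalization:
  assumes P: "psd n A"
  obtains U r where "unitary n U" "A = U * mat_diag n (\<lambda>k. complex_of_real (r k)) * adj U"
    "\<forall>k<n. r k \<ge> 0"
proof -
  have A: "A \<in> carrier_mat n n" using psd_carrier[OF P] .
  obtain U d where U: "unitary n U" and Ad: "A = U * mat_diag n d * adj U"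
    using hermitian_spectral[OF A psd_hermitian[OF P]] by blast
  note UD = unitaryD[OF U]
  have cU: "col U k \<in> carrier_vec n" for k using UD(1) unfolding carrier_vec_def by simp
  have dk: "d k = qf A (col U k)" if k: "k < n" for k
  proof -
    have "qf A (col U k) = (\<Sum>j<n. d j * (unit_vec n k $ j * cnj (unit_vec n k $ j)))"
      unfolding Ad qf_diag_conj[OF UD(1) cU] unitary_col(1)[OF U k] ..
    also have "\<dots> = (\<Sum>j<n. if j = k then d j else 0)"
      by (rule sum.cong) (auto simp: unit_vec_def)
    also have "\<dots> = d k" using k by simp
    finally show ?thesis by simp
  qed
  define r where "r k = Re (d k)" for k
  have dr: "d k = complex_of_real (r k)" and "r k \<ge> 0" if k: "k < n" for k
    using psd_qf[OF P cU] dk[OF k] unfolding r_def by auto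
  moreover have "mat_diag n d = mat_diag n (\<lambda>k. complex_of_real (r k))"
    by (rule eq_matI) (auto simp: mat_diag_def dr)
  ultimately show ?thesis using that U Ad by metis
qed

lemma psd_qf_zero_kernel:
  assumes P: "psd n B" and v: "v \<in> carrier_vec n" and q: "qf B v = 0"
  shows "B *\<^sub>v v = 0\<^sub>v n"
proof -
  obtain U r where U: "unitary n U" and Bd: "B = U * mat_diag n (\<lambda>k. complex_of_real (r k)) * adj U"
    and r: "\<forall>k<n. r k \<ge> 0"
    using psd_diagonalization[OF P] by blast
  note UD = unitaryD[OF U]
  define y where "y = adj U *\<^sub>v v"
  have y: "y \<in> carrier_vec n" unfolding y_def by (rule mult_mat_vec_carrier[OF adj_carrier[OF UD(1)] v])
  have "complex_of_real (\<Sum>k<n. r k * (cmod (y $ k))\<^sup>2) = 0"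
    using q qf_diag_conj_real[OF UD(1) v] unfolding Bd y_def by simp
  then have "(\<Sum>k<n. r k * (cmod (y $ k))\<^sup>2) = 0" by (simp only: of_real_eq_0_iff)
  then have "r k * (cmod (y $ k))\<^sup>2 = 0" if "k < n" for k
    using sum_nonneg_eq_0_iff[of "{..<n}" "\<lambda>k. r k * (cmod (y $ k))\<^sup>2"] r that by simp
  then have Dy: "mat_diag n (\<lambda>k. complex_of_real (r k)) *\<^sub>v y = 0\<^sub>v n"
    unfolding mat_diag_mult_vec[OF y] by (intro eq_vecI) auto
  have "B *\<^sub>v v = U *\<^sub>v (mat_diag n (\<lambda>k. complex_of_real (r k)) *\<^sub>v y)"
    unfolding Bd y_def using UD v
    by (simp add: assoc_mult_mat_vec[of _ n n _ n] square_mult_carrier square_mult_vec_carrier)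
  also have "\<dots> = 0\<^sub>v n" unfolding Dy using UD by (intro eq_vecI) (auto simp: scalar_prod_def)
  finally show ?thesis .
qed

lemma qf_congruence:
  assumes U: "U \<in> carrier_mat n n" and P: "P \<in> carrier_mat n n" and z: "z \<in> carrier_vec n"
  shows "qf (adj U * P * U) z = qf P (U *\<^sub>v z)"
proof -
  have "(adj U * P * U) *\<^sub>v z = adj U *\<^sub>v (P *\<^sub>v (U *\<^sub>v z))"
    using U P z
    by (simp add: assoc_mult_mat_vec[of _ n n _ n] square_mult_carrier square_mult_vec_carrier)
  then show ?thesis
    unfolding qf_def using adj_cscalar[OF adj_carrier[OF U] _ z, of "P *\<^sub>v (U *\<^sub>v z)"] P U z
    by simp
qed

lemma psd_congruence:
  assumes P: "psd n P" and U: "U \<in> carrier_mat n n"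
  shows "psd n (adj U * P * U)"
proof (rule psdI)
  have Pc: "P \<in> carrier_mat n n" using psd_carrier[OF P] .
  then show "adj U * P * U \<in> carrier_mat n n" using U by (simp add: square_mult_carrier)
  fix z :: "complex vec" assume z: "z \<in> carrier_vec n"
  then show "Im (qf (adj U * P * U) z) = 0 \<and> Re (qf (adj U * P * U) z) \<ge> 0"
    unfolding qf_congruence[OF U Pc z] using psd_qf[OF P square_mult_vec_carrier[OF U z]]
    by (metis Im_complex_of_real)
qed

lemma psd_smult:
  assumes P: "psd n A" and r: "r \<ge> 0"
  shows "psd n (complex_of_real r \<cdot>\<^sub>m A)"
proof (rule psdI)
  have A: "A \<in> carrier_mat n n" using psd_carrier[OF P] .
  then show "complex_of_real r \<cdot>\<^sub>m A \<in> carrier_mat n n" by simp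
  fix v :: "complex vec" assume v: "v \<in> carrier_vec n"
  have "qf (complex_of_real r \<cdot>\<^sub>m A) v = complex_of_real (r * Re (qf A v))"
    unfolding qf_smult[OF A v] using psd_qf(1)[OF P v] by (metis of_real_mult)
  then show "Im (qf (complex_of_real r \<cdot>\<^sub>m A) v) = 0 \<and> Re (qf (complex_of_real r \<cdot>\<^sub>m A) v) \<ge> 0"
    using psd_qf(2)[OF P v] r by simp
qed

section \<open>Traces\<close>

lemma mtrace_minus:
  "A \<in> carrier_mat n n \<Longrightarrow> B \<in> carrier_mat n n \<Longrightarrow> mtrace (A - B) = mtrace A - mtrace B"
  by (simp add: mtrace_def sum_subtractf)

lemma mtrace_smult: "A \<in> carrier_mat n n \<Longrightarrow> mtrace (a \<cdot>\<^sub>m A) = a * mtrace A"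
  by (simp add: mtrace_def sum_distrib_left)

text \<open>The trace of a psd matrix is a nonnegative real, namely the sum of the values of the
  form on the standard basis.\<close>
lemma psd_trace:
  assumes P: "psd n M"
  shows "mtrace M = complex_of_real (Re (mtrace M))" "Re (mtrace M) \<ge> 0"
proof -
  have M: "M \<in> carrier_mat n n" using psd_carrier[OF P] .
  have "mtrace M = (\<Sum>i<n. qf M (unit_vec n i))"
    using M by (simp add: mtrace_def qf_unit_vec)
  also have "\<dots> = complex_of_real (\<Sum>i<n. Re (qf M (unit_vec n i)))"
    unfolding of_real_sum using psd_qf(1)[OF P] by (auto intro!: sum.cong)
  finally have e: "mtrace M = complex_of_real (\<Sum>i<n. Re (qf M (unit_vec n i)))" .
  show "mtrace M = complex_of_real (Re (mtrace M))" using e by simp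
  show "Re (mtrace M) \<ge> 0" unfolding e using psd_qf(2)[OF P] by (simp add: sum_nonneg)
qed

lemma psd_trace_zero:
  assumes P: "psd n M" and t: "mtrace M = 0"
  shows "M = 0\<^sub>m n n"
proof (rule eq_matI)
  have M: "M \<in> carrier_mat n n" using psd_carrier[OF P] .
  have "(\<Sum>i<n. Re (qf M (unit_vec n i))) = 0"
    using t M by (simp add: mtrace_def qf_unit_vec flip: Re_sum)
  then have "Re (qf M (unit_vec n i)) = 0" if "i < n" for i
    using sum_nonneg_eq_0_iff[of "{..<n}" "\<lambda>i. Re (qf M (unit_vec n i))"] psd_qf(2)[OF P] that
    by simp
  then have "qf M (unit_vec n i) = 0" if "i < n" for i
    using psd_qf(1)[OF P, of "unit_vec n i"] that by simp
  then have col0: "col M i = 0\<^sub>v n" if "i < n" for i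
    using psd_qf_zero_kernel[OF P unit_vec_carrier] mult_unit_vec[OF M that] that by simp
  fix i j assume "i < dim_row (0\<^sub>m n n)" "j < dim_col (0\<^sub>m n n)"
  then have i: "i < n" and j: "j < n" by auto
  have "M $$ (i, j) = col M j $ i" using M i j by simp
  then show "M $$ (i, j) = 0\<^sub>m n n $$ (i, j)" using col0[OF j] i j by simp
qed (use P in \<open>auto simp: psd_def\<close>)

lemma mtrace_mult:
  assumes "A \<in> carrier_mat n n" "X \<in> carrier_mat n n"
  shows "mtrace (A * X) = (\<Sum>i<n. \<Sum>l<n. A $$ (i, l) * X $$ (l, i))"
  using assms by (auto simp: mtrace_def scalar_prod_def atLeast0LessThan intro!: sum.cong)

lemma diag_conj_index:
  assumes V: "V \<in> carrier_mat n n" and i: "i < n" and j: "j < n"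
  shows "(V * mat_diag n d * adj V) $$ (i, j) = (\<Sum>k<n. V $$ (i, k) * d k * cnj (V $$ (j, k)))"
  unfolding mat_diag_mult_right[OF V]
  using V i j by (auto simp: scalar_prod_def atLeast0LessThan intro!: sum.cong)

lemma trace_diag_conj:
  assumes U: "U \<in> carrier_mat n n" and X: "X \<in> carrier_mat n n"
  shows "mtrace (U * mat_diag n d * adj U * X) = (\<Sum>k<n. d k * qf X (col U k))"
proof -
  have S: "U * mat_diag n d * adj U \<in> carrier_mat n n" using U by (simp add: square_mult_carrier)
  have "mtrace (U * mat_diag n d * adj U * X)
      = (\<Sum>i<n. \<Sum>l<n. (U * mat_diag n d * adj U) $$ (i, l) * X $$ (l, i))"
    by (rule mtrace_mult[OF S X])
  also have "\<dots> = (\<Sum>i<n. \<Sum>l<n. \<Sum>k<n. U $$ (i, k) * d k * cnj (U $$ (l, k)) * X $$ (l, i))"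
    using diag_conj_index[OF U] by (simp add: sum_distrib_right)
  also have "\<dots> = (\<Sum>i<n. \<Sum>k<n. \<Sum>l<n. U $$ (i, k) * d k * cnj (U $$ (l, k)) * X $$ (l, i))"
    by (rule sum.cong[OF refl], rule sum.swap)
  also have "\<dots> = (\<Sum>k<n. \<Sum>i<n. \<Sum>l<n. U $$ (i, k) * d k * cnj (U $$ (l, k)) * X $$ (l, i))"
    by (rule sum.swap)
  also have "\<dots> = (\<Sum>k<n. \<Sum>l<n. \<Sum>i<n. U $$ (i, k) * d k * cnj (U $$ (l, k)) * X $$ (l, i))"
    by (rule sum.cong[OF refl], rule sum.swap)
  also have "\<dots> = (\<Sum>k<n. d k * (\<Sum>l<n. (\<Sum>i<n. X $$ (l, i) * col U k $ i) * cnj (col U k $ l)))"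
    using U by (auto simp: sum_distrib_left sum_distrib_right mult_ac intro!: sum.cong)
  also have "\<dots> = (\<Sum>k<n. d k * qf X (col U k))"
    using qf_sum[OF X] U by (auto intro!: sum.cong)
  finally show ?thesis .
qed

lemma trace_diag_conj_psd:
  assumes U: "U \<in> carrier_mat n n" and X: "psd n X"
  shows "mtrace (U * mat_diag n (\<lambda>k. complex_of_real (r k)) * adj U * X)
       = complex_of_real (\<Sum>k<n. r k * Re (qf X (col U k)))"
proof -
  have "col U k \<in> carrier_vec n" for k using U unfolding carrier_vec_def by simp
  then show ?thesis
    unfolding trace_diag_conj[OF U psd_carrier[OF X]] of_real_sum of_real_mult
    by (simp only: psd_qf(1)[OF X, symmetric])
qed

lemma trace_diag_conj_sum:
  assumes U: "unitary n U"
  shows "mtrace (U * mat_diag n (\<lambda>k. complex_of_real (r k)) * adj U) = complex_of_real (\<Sum>k<n. r k)"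
proof -
  note UD = unitaryD[OF U]
  have u: "col U k \<in> carrier_vec n" for k using UD(1) unfolding carrier_vec_def by simp
  have "mtrace (U * mat_diag n (\<lambda>k. complex_of_real (r k)) * adj U)
      = complex_of_real (\<Sum>k<n. r k * Re (qf (1\<^sub>m n) (col U k)))"
    using trace_diag_conj_psd[OF UD(1) psd_one, of r] UD(1) by (simp add: square_mult_carrier)
  also have "(\<Sum>k<n. r k * Re (qf (1\<^sub>m n) (col U k))) = (\<Sum>k<n. r k)"
    by (rule sum.cong) (simp_all add: qf_one[OF u] unitary_col(2)[OF U])
  finally show ?thesis .
qed

lemma trace_psd_mult_real:
  assumes "psd n A" and "psd n X"
  shows "mtrace (A * X) = complex_of_real (Re (mtrace (A * X)))"
proof -
  obtain U r where "unitary n U" and "A = U * mat_diag n (\<lambda>k. complex_of_real (r k)) * adj U"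
    using psd_diagonalization[OF assms(1)] by blast
  then show ?thesis using trace_diag_conj_psd[OF unitaryD(1) assms(2)] by simp
qed

lemma diag_conj_eigenvalue:
  assumes U: "unitary n U" and k: "k < n"
  shows "eigenvalue (U * mat_diag n d * adj U) (d k)"
proof -
  note UD = unitaryD[OF U]
  have u: "col U k \<in> carrier_vec n" using UD(1) unfolding carrier_vec_def by simp
  have "(U * mat_diag n d * adj U) *\<^sub>v col U k = U *\<^sub>v (mat_diag n d *\<^sub>v unit_vec n k)"
    using UD(1) u unitary_col(1)[OF U k]
    by (simp add: assoc_mult_mat_vec[of _ n n _ n] square_mult_carrier square_mult_vec_carrier)
  also have "mat_diag n d *\<^sub>v unit_vec n k = d k \<cdot>\<^sub>v unit_vec n k"
    using k by (auto simp: mat_diag_mult_vec intro!: eq_vecI)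
  also have "U *\<^sub>v (d k \<cdot>\<^sub>v unit_vec n k) = d k \<cdot>\<^sub>v col U k"
    using mult_mat_vec[OF UD(1) unit_vec_carrier] mult_unit_vec[OF UD(1) k] by simp
  finally have "(U * mat_diag n d * adj U) *\<^sub>v col U k = d k \<cdot>\<^sub>v col U k" .
  moreover have "col U k \<noteq> 0\<^sub>v n" using unitary_col(2)[OF U k] u by auto
  ultimately show ?thesis
    unfolding eigenvalue_def eigenvector_def using u UD(1) by (auto simp: square_mult_carrier)
qed

section \<open>The separable cone\<close>

lemma kron_dims [simp]:
  "dim_row (kron A B) = dim_row A * dim_row B" "dim_col (kron A B) = dim_col A * dim_col B"
  by (simp_all add: kron_def)

lemma tensor_list_carrier:
  "length Ms = length ds \<Longrightarrow> (\<forall>k<length ds. Ms ! k \<in> carrier_mat (ds ! k) (ds ! k)) \<Longrightarrow>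
   tensor_list Ms \<in> carrier_mat (prod_list ds) (prod_list ds)"
proof (induction ds arbitrary: Ms)
  case Nil
  then show ?case by simp
next
  case (Cons d ds Ms)
  then obtain M Ms' where Ms: "Ms = M # Ms'" by (cases Ms) auto
  have "M \<in> carrier_mat d d" using Cons.prems(2)[rule_format, of 0] Ms by simp
  moreover have "tensor_list Ms' \<in> carrier_mat (prod_list ds) (prod_list ds)"
    using Cons.IH[of Ms'] Cons.prems Ms by force
  ultimately show ?case unfolding Ms by (intro carrier_matI) auto
qed

lemma kron_one: "kron (1\<^sub>m a) (1\<^sub>m b) = 1\<^sub>m (a * b)"
proof (rule eq_matI)
  fix i j assume "i < dim_row (1\<^sub>m (a * b))" "j < dim_col (1\<^sub>m (a * b))"
  then have i: "i < a * b" and j: "j < a * b" by auto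
  then have b: "b > 0" by (cases b) auto
  have "i div b < a" "j div b < a" using i j b by (simp_all add: less_mult_imp_div_less mult.commute)
  moreover have "(i div b = j div b \<and> i mod b = j mod b) = (i = j)"
    by (metis div_mult_mod_eq)
  ultimately show "kron (1\<^sub>m a) (1\<^sub>m b) $$ (i, j) = 1\<^sub>m (a * b) $$ (i, j)"
    using i j b by (auto simp: kron_def)
qed auto

lemma tensor_list_ones:
  "length Ms = length ds \<Longrightarrow> (\<forall>k<length ds. Ms ! k = 1\<^sub>m (ds ! k)) \<Longrightarrow>
   tensor_list Ms = 1\<^sub>m (prod_list ds)"
proof (induction ds arbitrary: Ms)
  case Nil
  then show ?case by simp
next
  case (Cons d ds Ms)
  then obtain M Ms' where Ms: "Ms = M # Ms'" by (cases Ms) auto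
  have "M = 1\<^sub>m d" using Cons.prems(2)[rule_format, of 0] Ms by simp
  moreover have "tensor_list Ms' = 1\<^sub>m (prod_list ds)"
    using Cons.IH[of Ms'] Cons.prems Ms by force
  ultimately show ?case using Ms by (simp add: kron_one)
qed

lemma mat_sum_smult:
  "(\<forall>j<N. f j \<in> carrier_mat n n) \<Longrightarrow>
   mat_sum n N f \<in> carrier_mat n n \<and> a \<cdot>\<^sub>m mat_sum n N f = mat_sum n N (\<lambda>j. a \<cdot>\<^sub>m f j)"
  by (induction N) (auto simp: add_smult_distrib_left_mat)

lemma separable_smult:
  assumes S: "separable ds A" and r: "r \<ge> 0"
  shows "separable ds (complex_of_real r \<cdot>\<^sub>m A)"
proof -
  obtain N c P where cP: "\<forall>j<N. c j \<ge> 0 \<and> (\<forall>k<length ds. psd (ds ! k) (P j k))"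
    and A: "A = mat_sum (total_dim ds) N
                  (\<lambda>j. complex_of_real (c j) \<cdot>\<^sub>m tensor_list (map (P j) [0..<length ds]))"
    using S unfolding separable_def by blast
  let ?T = "\<lambda>j. tensor_list (map (P j) [0..<length ds])"
  have "?T j \<in> carrier_mat (total_dim ds) (total_dim ds)" if "j < N" for j
    unfolding total_dim_def
    by (rule tensor_list_carrier) (use cP that in \<open>auto simp: psd_def\<close>)
  then have "complex_of_real r \<cdot>\<^sub>m A
      = mat_sum (total_dim ds) N (\<lambda>j. complex_of_real r \<cdot>\<^sub>m (complex_of_real (c j) \<cdot>\<^sub>m ?T j))"
    unfolding A by (intro conjunct2[OF mat_sum_smult]) auto
  also have "\<dots> = mat_sum (total_dim ds) N (\<lambda>j. complex_of_real (r * c j) \<cdot>\<^sub>m ?T j)"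
    by (rule arg_cong[where f = "mat_sum _ _"]) (auto intro!: eq_matI)
  finally show ?thesis unfolding separable_def using cP r
    by (intro exI[of _ N] exI[of _ "\<lambda>j. r * c j"] exI[of _ P]) auto
qed

lemma separable_one: "separable ds (1\<^sub>m (total_dim ds))"
proof -
  let ?P = "\<lambda>(j::nat) k. 1\<^sub>m (ds ! k)"
  have "tensor_list (map (?P 0) [0..<length ds]) = 1\<^sub>m (total_dim ds)"
    unfolding total_dim_def by (rule tensor_list_ones) auto
  then have "mat_sum (total_dim ds) 1
      (\<lambda>j. complex_of_real 1 \<cdot>\<^sub>m tensor_list (map (?P j) [0..<length ds])) = 1\<^sub>m (total_dim ds)"
    by (auto intro!: eq_matI)
  then show ?thesis unfolding separable_def
    by (intro exI[of _ "1::nat"] exI[of _ "\<lambda>_. 1::real"] exI[of _ ?P]) (auto simp: psd_one)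
qed

section \<open>The operator inequality \<sigma> \<le> \<alpha>P\<close>

lemma cscalar_add_add:
  fixes p q a z :: "complex vec"
  assumes "p \<in> carrier_vec n" "q \<in> carrier_vec n" "a \<in> carrier_vec n" "z \<in> carrier_vec n"
  shows "(p + q) \<bullet>c (a + z) = p \<bullet>c a + p \<bullet>c z + q \<bullet>c a + q \<bullet>c z"
proof -
  have "(p + q) \<bullet>c (a + z) = (p + q) \<bullet> conjugate a + (p + q) \<bullet> conjugate z"
    using assms by (simp add: conjugate_add_vec scalar_prod_add_distrib[of _ n])
  also have "\<dots> = p \<bullet>c a + q \<bullet>c a + (p \<bullet>c z + q \<bullet>c z)"
    using assms by (simp add: add_scalar_prod_distrib[of _ n])
  finally show ?thesis by (simp add: algebra_simps)
qed

text \<open>If a psd matrix C fixes the standard basis vectors e_k with J k, then its form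
  dominates the squared norm of the J-part of any vector: splitting y = a + z along J and its
  complement, C a = a and C z is orthogonal to a (C is Hermitian), so qf C y = |a|^2 + qf C z.\<close>
lemma psd_form_fixed_coords:
  assumes P: "psd n C"
    and fixed: "\<And>k. k < n \<Longrightarrow> J k \<Longrightarrow> C *\<^sub>v unit_vec n k = unit_vec n k"
    and y: "y \<in> carrier_vec n"
  shows "(\<Sum>k<n. if J k then (cmod (y $ k))\<^sup>2 else 0) \<le> Re (qf C y)"
proof -
  have C: "C \<in> carrier_mat n n" and hC: "adj C = C" using P psd_hermitian by (auto simp: psd_def)
  define a where "a = vec n (\<lambda>k. if J k then y $ k else 0)"
  define z where "z = vec n (\<lambda>k. if J k then 0 else y $ k)"
  have a: "a \<in> carrier_vec n" and z: "z \<in> carrier_vec n" unfolding a_def z_def by auto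
  have yaz: "y = a + z" using y by (intro eq_vecI) (auto simp: a_def z_def)
  have Cik: "C $$ (i, k) = (if i = k then 1 else 0)" if "i < n" "k < n" "J k" for i k
    using arg_cong[OF fixed[OF that(2,3)], of "\<lambda>w. w $ i"] mult_unit_vec[OF C that(2)] C that
    by simp
  have Ca: "C *\<^sub>v a = a"
  proof (rule eq_vecI)
    fix i assume "i < dim_vec a"
    then have i: "i < n" using a by simp
    have "(C *\<^sub>v a) $ i = (\<Sum>k<n. C $$ (i, k) * a $ k)"
      using C a i by (auto simp: scalar_prod_def atLeast0LessThan intro!: sum.cong)
    also have "\<dots> = (\<Sum>k<n. if k = i then a $ k else 0)"
      by (rule sum.cong) (use Cik i in \<open>auto simp: a_def\<close>)
    finally show "(C *\<^sub>v a) $ i = a $ i" using i by simp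
  qed (use C a in auto)
  have az: "a \<bullet>c z = 0" and za: "z \<bullet>c a = 0"
    unfolding a_def z_def by (auto simp: scalar_prod_def intro!: sum.neutral)
  have Cz: "C *\<^sub>v z \<in> carrier_vec n" using C z by simp
  have Cza: "(C *\<^sub>v z) \<bullet>c a = 0"
    using adj_cscalar[OF C z a] unfolding hC Ca za by simp
  have "qf C y = (a + C *\<^sub>v z) \<bullet>c (a + z)"
    unfolding qf_def yaz mult_add_distrib_mat_vec[OF C a z] Ca ..
  also have "\<dots> = a \<bullet>c a + qf C z"
    unfolding cscalar_add_add[OF a Cz a z] az Cza qf_def by simp
  finally have e: "Re (qf C y) = Re (a \<bullet>c a) + Re (qf C z)" by simp
  have "a \<bullet>c a = (\<Sum>k<n. if J k then y $ k * cnj (y $ k) else 0)"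
    unfolding a_def by (auto simp: scalar_prod_def atLeast0LessThan intro!: sum.cong)
  also have "\<dots> = complex_of_real (\<Sum>k<n. if J k then (cmod (y $ k))\<^sup>2 else 0)"
    unfolding of_real_sum by (rule sum.cong) (auto simp: complex_norm_square[symmetric])
  finally show ?thesis using e psd_qf(2)[OF P z] by simp
qed

lemma diag_conj_dominated:
  assumes U: "unitary n U" and \<alpha>: "\<alpha> \<ge> 0" and r: "\<And>k. k < n \<Longrightarrow> 0 \<le> r k \<and> r k \<le> \<alpha>"
    and P: "psd n P" and fixed: "\<And>k. k < n \<Longrightarrow> r k > 0 \<Longrightarrow> P *\<^sub>v col U k = col U k"
  shows "psd n (complex_of_real \<alpha> \<cdot>\<^sub>m P - U * mat_diag n (\<lambda>k. complex_of_real (r k)) * adj U)"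
    (is "psd n (_ - ?\<sigma>)")
proof (rule psdI)
  note UD = unitaryD[OF U]
  have Pc: "P \<in> carrier_mat n n" and aU: "adj U \<in> carrier_mat n n" using P UD by (auto simp: psd_def)
  have S: "?\<sigma> \<in> carrier_mat n n" using UD by (simp add: square_mult_carrier)
  show "complex_of_real \<alpha> \<cdot>\<^sub>m P - ?\<sigma> \<in> carrier_mat n n" using S by (rule minus_carrier_mat)
  define C where "C = adj U * P * U"
  have C: "psd n C" unfolding C_def by (rule psd_congruence[OF P UD(1)])
  have Cfix: "C *\<^sub>v unit_vec n k = unit_vec n k" if "k < n" "r k > 0" for k
    unfolding C_def
    using UD Pc that fixed[OF that] mult_unit_vec[OF UD(1) that(1)] unitary_col(1)[OF U that(1)]
    by (simp add: assoc_mult_mat_vec[of _ n n _ n] square_mult_carrier square_mult_vec_carrier)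
  fix x :: "complex vec" assume x: "x \<in> carrier_vec n"
  define y where "y = adj U *\<^sub>v x"
  have y: "y \<in> carrier_vec n" unfolding y_def using square_mult_vec_carrier[OF aU x] .
  have "U *\<^sub>v y = (U * adj U) *\<^sub>v x"
    unfolding y_def using UD(1) aU x by (simp add: assoc_mult_mat_vec[of _ n n _ n])
  then have Uy: "U *\<^sub>v y = x" using UD(3) x by simp
  have "(\<Sum>k<n. r k * (cmod (y $ k))\<^sup>2) \<le> (\<Sum>k<n. \<alpha> * (if r k > 0 then (cmod (y $ k))\<^sup>2 else 0))"
    by (rule sum_mono) (use r in \<open>force intro: mult_right_mono\<close>)
  also have "\<dots> \<le> \<alpha> * Re (qf P x)"
    using psd_form_fixed_coords[OF C Cfix y] qf_congruence[OF UD(1) Pc y] \<alpha>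
    unfolding Uy C_def by (simp add: sum_distrib_left[symmetric] mult_left_mono)
  finally have le: "(\<Sum>k<n. r k * (cmod (y $ k))\<^sup>2) \<le> \<alpha> * Re (qf P x)" .
  have "qf (complex_of_real \<alpha> \<cdot>\<^sub>m P - ?\<sigma>) x
      = complex_of_real (\<alpha> * Re (qf P x) - (\<Sum>k<n. r k * (cmod (y $ k))\<^sup>2))"
    using qf_minus[OF _ S x, of "complex_of_real \<alpha> \<cdot>\<^sub>m P"] qf_smult[OF Pc x]
      qf_diag_conj_real[OF UD(1) x] psd_qf(1)[OF P x] Pc
    unfolding y_def by (simp add: of_real_mult)
  then show "Im (qf (complex_of_real \<alpha> \<cdot>\<^sub>m P - ?\<sigma>) x) = 0 \<and>
      Re (qf (complex_of_real \<alpha> \<cdot>\<^sub>m P - ?\<sigma>) x) \<ge> 0"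
    using le by simp
qed

lemma trace_zero_annihilates:
  assumes U: "unitary n U" and r: "\<And>k. k < n \<Longrightarrow> r k \<ge> 0" and B: "psd n B"
    and tr: "mtrace (U * mat_diag n (\<lambda>k. complex_of_real (r k)) * adj U * B) = 0"
    and k: "k < n" "r k > 0"
  shows "B *\<^sub>v col U k = 0\<^sub>v n"
proof -
  have u: "col U j \<in> carrier_vec n" for j using unitaryD(1)[OF U] unfolding carrier_vec_def by simp
  have "(\<Sum>j<n. r j * Re (qf B (col U j))) = 0"
    using tr unfolding trace_diag_conj_psd[OF unitaryD(1)[OF U] B] by (metis of_real_eq_0_iff)
  moreover have "0 \<le> r j * Re (qf B (col U j))" if "j \<in> {..<n}" for j
    using r psd_qf(2)[OF B u] that by simp
  ultimately have "r k * Re (qf B (col U k)) = 0"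
    using sum_nonneg_eq_0_iff[of "{..<n}" "\<lambda>j. r j * Re (qf B (col U j))"] k by blast
  then have "qf B (col U k) = 0" using k psd_qf(1)[OF B u[of k]] by simp
  then show ?thesis by (rule psd_qf_zero_kernel[OF B u])
qed

lemma mtrace_mult_one_minus:
  assumes A: "A \<in> carrier_mat n n" and P: "P \<in> carrier_mat n n"
  shows "mtrace (A * (1\<^sub>m n - P)) = mtrace A - mtrace (A * P)"
proof -
  have "A * (1\<^sub>m n - P) = A - A * P"
    using mult_minus_distrib_mat[OF A one_carrier_mat P] A by simp
  then show ?thesis using mtrace_minus[OF A square_mult_carrier[OF A P]] by simp
qed

lemma fixed_of_one_minus_kernel:
  fixes P :: "complex mat"
  assumes P: "P \<in> carrier_mat n n" and u: "u \<in> carrier_vec n"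
    and ker: "(1\<^sub>m n - P) *\<^sub>v u = 0\<^sub>v n"
  shows "P *\<^sub>v u = u"
proof (rule eq_vecI)
  have "u - P *\<^sub>v u = (1\<^sub>m n - P) *\<^sub>v u"
    using minus_mult_distrib_mat_vec[of "1\<^sub>m n" n n P u] P u by simp
  then have d: "u - P *\<^sub>v u = 0\<^sub>v n" using ker by simp
  fix i assume "i < dim_vec u"
  then have i: "i < n" using u by simp
  have "(u - P *\<^sub>v u) $ i = 0" using d i by simp
  then show "(P *\<^sub>v u) $ i = u $ i" using i P u by simp
qed (use P u in simp)

theorem state_below_scaled_test:
  assumes \<sigma>: "psd n \<sigma>" "mtrace \<sigma> = 1" and ev: "\<forall>e. eigenvalue \<sigma> e \<longrightarrow> Re e \<le> \<alpha>"
    and P: "psd n P" and IP: "psd n (1\<^sub>m n - P)" and tP: "mtrace (\<sigma> * P) = 1"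
  shows "\<alpha> > 0" and "psd n (complex_of_real \<alpha> \<cdot>\<^sub>m P - \<sigma>)"
proof -
  obtain U r where U: "unitary n U" and \<sigma>d: "\<sigma> = U * mat_diag n (\<lambda>k. complex_of_real (r k)) * adj U"
    and r: "\<forall>k<n. r k \<ge> 0"
    using psd_diagonalization[OF \<sigma>(1)] by blast
  note UD = unitaryD[OF U]
  have S: "\<sigma> \<in> carrier_mat n n" and Pc: "P \<in> carrier_mat n n" using \<sigma>(1) P by (auto simp: psd_def)
  have rle: "r k \<le> \<alpha>" if "k < n" for k
    using ev diag_conj_eigenvalue[OF U that] unfolding \<sigma>d by fastforce
  have "complex_of_real (\<Sum>k<n. r k) = 1"
    using trace_diag_conj_sum[OF U, of r] \<sigma>(2) unfolding \<sigma>d by simp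
  then have "(\<Sum>k<n. r k) = 1" by (metis of_real_eq_1_iff)
  then show apos: "\<alpha> > 0"
  proof (rule contrapos_pp)
    assume "\<not> \<alpha> > 0"
    then have "\<forall>k<n. r k \<le> 0" using rle by fastforce
    then have "(\<Sum>k<n. r k) \<le> 0" by (intro sum_nonpos) auto
    then show "(\<Sum>k<n. r k) \<noteq> 1" by simp
  qed
  have "mtrace (\<sigma> * (1\<^sub>m n - P)) = 0"
    using mtrace_mult_one_minus[OF S Pc] \<sigma>(2) tP by simp
  then have "(1\<^sub>m n - P) *\<^sub>v col U k = 0\<^sub>v n" if "k < n" "r k > 0" for k
    using trace_zero_annihilates[of n U r "1\<^sub>m n - P" k] U r IP that unfolding \<sigma>d by blast
  then have "P *\<^sub>v col U k = col U k" if "k < n" "r k > 0" for k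
    using fixed_of_one_minus_kernel[OF Pc] UD(1) that unfolding carrier_vec_def by simp
  then show "psd n (complex_of_real \<alpha> \<cdot>\<^sub>m P - \<sigma>)"
    unfolding \<sigma>d using diag_conj_dominated[OF U _ _ P] apos r rle by simp
qed

section \<open>Robustness bound from a dominating separable operator\<close>

text \<open>An operator Q dominating a state \<sigma> is a (non-normalised) mixture of \<sigma> with another
  state: Q = \<sigma> + t\<rho> with t = Tr Q - 1 \<ge> 0, taking \<rho> = (Q - \<sigma>)/t if t > 0 and any state
  (say \<sigma>) if t = 0, in which case Q = \<sigma>.\<close>
lemma dominating_mixture:
  assumes \<sigma>: "density ds \<sigma>" and Q: "psd (total_dim ds) Q"
    and dom: "psd (total_dim ds) (Q - \<sigma>)"
  defines "t \<equiv> Re (mtrace Q) - 1"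
  shows "t \<ge> 0" and "\<exists>\<rho>. density ds \<rho> \<and> \<sigma> + complex_of_real t \<cdot>\<^sub>m \<rho> = Q"
proof -
  define n where "n = total_dim ds"
  have S: "\<sigma> \<in> carrier_mat n n" and tr\<sigma>: "mtrace \<sigma> = 1"
    using \<sigma> by (auto simp: density_def psd_def n_def)
  have Qc: "Q \<in> carrier_mat n n" using Q by (simp add: psd_def n_def)
  have trM: "mtrace (Q - \<sigma>) = complex_of_real t"
    using mtrace_minus[OF Qc S] psd_trace(1)[OF Q] tr\<sigma> unfolding t_def by simp
  show t0: "t \<ge> 0" using psd_trace(2)[OF dom] trM by simp
  show "\<exists>\<rho>. density ds \<rho> \<and> \<sigma> + complex_of_real t \<cdot>\<^sub>m \<rho> = Q"
  proof (cases "t > 0")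
    case True
    define \<rho> where "\<rho> = complex_of_real (1 / t) \<cdot>\<^sub>m (Q - \<sigma>)"
    have "mtrace \<rho> = 1"
      unfolding \<rho>_def using mtrace_smult[OF minus_carrier_mat[OF S, of Q]] trM True by simp
    then have "density ds \<rho>" unfolding density_def \<rho>_def using True psd_smult[OF dom, of "1 / t"] by simp
    moreover have "complex_of_real t \<cdot>\<^sub>m \<rho> = Q - \<sigma>"
      unfolding \<rho>_def using True by (auto intro!: eq_matI simp flip: of_real_mult)
    then have "\<sigma> + complex_of_real t \<cdot>\<^sub>m \<rho> = Q" using S Qc by (auto intro!: eq_matI)
    ultimately show ?thesis by blast
  next
    case False
    then have QS0: "Q - \<sigma> = 0\<^sub>m n n" using t0 trM psd_trace_zero[OF dom[folded n_def]] by simp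
    have "Q = \<sigma>"
    proof (rule eq_matI)
      fix i j assume "i < dim_row \<sigma>" "j < dim_col \<sigma>"
      then show "Q $$ (i, j) = \<sigma> $$ (i, j)"
        using arg_cong[OF QS0, of "\<lambda>X. X $$ (i, j)"] S Qc by simp
    qed (use S Qc in auto)
    then show ?thesis using False t0 S \<sigma> by (auto intro!: exI[of _ \<sigma>] eq_matI)
  qed
qed

lemma normalized_separable_state:
  assumes Q: "psd (total_dim ds) Q" "separable ds Q"
    and t: "t \<ge> 0" "mtrace Q = complex_of_real (1 + t)"
  shows "sep_density ds ((1 / complex_of_real (1 + t)) \<cdot>\<^sub>m Q)"
proof -
  have Qc: "Q \<in> carrier_mat (total_dim ds) (total_dim ds)" using Q by (simp add: psd_def)
  have c: "1 / complex_of_real (1 + t) = complex_of_real (1 / (1 + t))" by simp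
  have "mtrace ((1 / complex_of_real (1 + t)) \<cdot>\<^sub>m Q) = complex_of_real (1 / (1 + t) * (1 + t))"
    unfolding c mtrace_smult[OF Qc] t(2) of_real_mult ..
  also have "1 / (1 + t) * (1 + t) = 1" using t by simp
  finally have "mtrace ((1 / complex_of_real (1 + t)) \<cdot>\<^sub>m Q) = 1" by simp
  moreover have r: "1 / (1 + t) \<ge> 0" using t by simp
  ultimately show ?thesis unfolding sep_density_def density_def c
    using psd_smult[OF Q(1) r] separable_smult[OF Q(2) r] by simp
qed

text \<open>If a separable psd operator Q dominates the state \<sigma>, then R_g(\<sigma>) \<le> Tr Q - 1: with
  Q = \<sigma> + t\<rho> as above, the mixture (\<sigma> + t\<rho>)/(1 + t) = Q / Tr Q is a separable state.\<close>
theorem robustness_le_dominating: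
  assumes \<sigma>: "density ds \<sigma>" and Q: "psd (total_dim ds) Q" "separable ds Q"
    and dom: "psd (total_dim ds) (Q - \<sigma>)"
  shows "global_robustness ds \<sigma> \<le> Re (mtrace Q) - 1"
proof -
  define t where "t = Re (mtrace Q) - 1"
  have t0: "t \<ge> 0" and "\<exists>\<rho>. density ds \<rho> \<and> \<sigma> + complex_of_real t \<cdot>\<^sub>m \<rho> = Q"
    using dominating_mixture[OF \<sigma> Q(1) dom] unfolding t_def by auto
  moreover have "mtrace Q = complex_of_real (1 + t)"
    unfolding t_def using psd_trace(1)[OF Q(1)] by simp
  ultimately have "t \<in> {t. t \<ge> 0 \<and> (\<exists>\<rho>. density ds \<rho> \<and>
      sep_density ds ((1 / complex_of_real (1 + t)) \<cdot>\<^sub>m (\<sigma> + complex_of_real t \<cdot>\<^sub>m \<rho>)))}"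
    using normalized_separable_state[OF Q t0] by auto
  then show ?thesis
    unfolding global_robustness_def t_def[symmetric] by (rule cInf_lower) (auto intro: bdd_belowI)
qed

definition admissible_test :: "nat list \<Rightarrow> complex mat \<Rightarrow> complex mat \<Rightarrow> bool" where
  "admissible_test ds \<sigma> Pm \<longleftrightarrow>
     psd (total_dim ds) Pm \<and> separable ds Pm \<and> Re (mtrace (\<sigma> * Pm)) > 0 \<and>
     psd (total_dim ds) ((1 / mtrace (\<sigma> * Pm)) \<cdot>\<^sub>m Pm) \<and>
     psd (total_dim ds) (1\<^sub>m (total_dim ds) - (1 / mtrace (\<sigma> * Pm)) \<cdot>\<^sub>m Pm)"

lemma d_val_admissible:
  "d_val ds \<sigma> = Inf {Re (mtrace Pm) / Re (mtrace (\<sigma> * Pm)) | Pm. admissible_test ds \<sigma> Pm}"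
  by (simp add: d_val_def admissible_test_def)

text \<open>For a state the identity is admissible, so the infimum defining d(\<sigma>) is over a
  nonempty set.\<close>
lemma identity_admissible:
  assumes "density ds \<sigma>"
  shows "admissible_test ds \<sigma> (1\<^sub>m (total_dim ds))"
proof -
  let ?n = "total_dim ds"
  have "\<sigma> \<in> carrier_mat ?n ?n" "mtrace \<sigma> = 1" using assms by (auto simp: density_def psd_def)
  then have tr: "mtrace (\<sigma> * 1\<^sub>m ?n) = 1" by simp
  have one: "(1 :: complex) \<cdot>\<^sub>m 1\<^sub>m ?n = 1\<^sub>m ?n" by (rule eq_matI) auto
  have zero: "1\<^sub>m ?n - 1\<^sub>m ?n = (0\<^sub>m ?n ?n :: complex mat)" by (rule eq_matI) auto
  have "psd ?n (0\<^sub>m ?n ?n)" unfolding psd_def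
  proof (intro conjI ballI)
    fix v :: "complex vec" assume v: "v \<in> carrier_vec ?n"
    then have "0\<^sub>m ?n ?n *\<^sub>v v = 0\<^sub>v ?n" by (intro eq_vecI) (auto simp: scalar_prod_def)
    then show "(0\<^sub>m ?n ?n *\<^sub>v v) \<bullet>c v \<ge> 0" using v by simp
  qed simp
  then have "psd ?n (1\<^sub>m ?n - 1\<^sub>m ?n)" unfolding zero .
  then show ?thesis
    unfolding admissible_test_def tr using psd_one separable_one[of ds] by (simp add: one)
qed

text \<open>Each admissible test operator bounds the robustness: with P = \<Pi> / Tr(\<sigma>\<Pi>) we have
  \<sigma> \<le> \<alpha>P, so R_g(\<sigma>) \<le> \<alpha> Tr P - 1.\<close>
theorem admissible_test_bound:
  assumes \<sigma>: "density ds \<sigma>" and ev: "\<forall>e. eigenvalue \<sigma> e \<longrightarrow> Re e \<le> \<alpha>"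
    and adm: "admissible_test ds \<sigma> Pm"
  shows "(1 + global_robustness ds \<sigma>) / \<alpha> \<le> Re (mtrace Pm) / Re (mtrace (\<sigma> * Pm))"
proof -
  define n where "n = total_dim ds"
  have \<sigma>': "psd n \<sigma>" "mtrace \<sigma> = 1" using \<sigma> by (auto simp: density_def n_def)
  have Pm: "psd n Pm" "separable ds Pm" and pos: "Re (mtrace (\<sigma> * Pm)) > 0"
    and P: "psd n ((1 / mtrace (\<sigma> * Pm)) \<cdot>\<^sub>m Pm)"
    and IP: "psd n (1\<^sub>m n - (1 / mtrace (\<sigma> * Pm)) \<cdot>\<^sub>m Pm)"
    using adm unfolding admissible_test_def n_def by auto
  have S: "\<sigma> \<in> carrier_mat n n" and Pmc: "Pm \<in> carrier_mat n n" using \<sigma>' Pm by (auto simp: psd_def)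
  define \<gamma> where "\<gamma> = Re (mtrace (\<sigma> * Pm))"
  have c: "mtrace (\<sigma> * Pm) = complex_of_real \<gamma>"
    unfolding \<gamma>_def by (rule trace_psd_mult_real[OF \<sigma>'(1) Pm(1)])
  have tP: "mtrace (\<sigma> * ((1 / mtrace (\<sigma> * Pm)) \<cdot>\<^sub>m Pm)) = 1"
    using mtrace_smult[OF square_mult_carrier[OF S Pmc]] mult_smult_distrib[OF S Pmc] c pos
    unfolding \<gamma>_def[symmetric] by simp
  note bound = state_below_scaled_test[OF \<sigma>' ev P IP tP]
  define Q where "Q = complex_of_real (\<alpha> / \<gamma>) \<cdot>\<^sub>m Pm"
  have "\<alpha> / \<gamma> \<ge> 0" using bound(1) pos unfolding \<gamma>_def by simp
  then have "psd n Q" and "separable ds Q"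
    unfolding Q_def by (rule psd_smult[OF Pm(1)], rule separable_smult[OF Pm(2)])
  moreover have "Q = complex_of_real \<alpha> \<cdot>\<^sub>m ((1 / mtrace (\<sigma> * Pm)) \<cdot>\<^sub>m Pm)"
    unfolding Q_def c by (auto intro!: eq_matI)
  ultimately have "global_robustness ds \<sigma> \<le> Re (mtrace Q) - 1"
    using robustness_le_dominating[OF \<sigma>, of Q] bound(2) unfolding n_def by simp
  also have "Re (mtrace Q) = \<alpha> * Re (mtrace Pm) / \<gamma>"
    unfolding Q_def mtrace_smult[OF Pmc] by simp
  finally show ?thesis
    using bound(1) pos unfolding \<gamma>_def by (simp add: field_simps)
qed

theorem mainTheorem9:
  fixes ds :: "nat list" and \<sigma> :: "complex mat" and \<alpha> :: real
  assumes "density ds \<sigma>"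
    and "eigenvalue \<sigma> (complex_of_real \<alpha>)"
    and "\<forall>e. eigenvalue \<sigma> e \<longrightarrow> Re e \<le> \<alpha>"
  shows "d_val ds \<sigma> \<ge> (1 + global_robustness ds \<sigma>) / \<alpha>"
proof -
  let ?values = "{Re (mtrace Pm) / Re (mtrace (\<sigma> * Pm)) | Pm. admissible_test ds \<sigma> Pm}"
  have "?values \<noteq> {}" using identity_admissible[OF assms(1)] by blast
  moreover have "(1 + global_robustness ds \<sigma>) / \<alpha> \<le> v" if "v \<in> ?values" for v
    using that admissible_test_bound[OF assms(1,3)] by blast
  ultimately show ?thesis
    unfolding d_val_admissible by (rule cInf_greatest)
qed

end
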